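(* $K_{10}$ and $K_{12}-C_{12}$ both have vertex connectivity $9$ and orientable genus $4$. $K_{14}$ and $K_{15}-6K_2$ both have vertex connectivity $13$ and orientable genus $10$. In particular, $K_{10}$ is not the unique graph with vertex connectivity 9 and genus 4, and $K_{14}$ is not the unique graph with vertex connectivity 13 and genus 10.
   Context: $K_{12}-C_{12}$ is $K_{12}$ with the edges of a Hamiltonian cycle removed. $K_{15}-6K_2$ is $K_{15}$ with the edges of a matching of size 6 removed. Genus means the minimum orientable genus of a surface in which the graph embeds. *)

theory Defs
  imports Main
begin

text \<open>Finite simple graphs: a vertex set V and a set E of 2-element subsets of V.\<close>

type_synonym 'a graph = "'a set \<times> 'a set set"

definition verts :: "'a graph \<Rightarrow> 'a set" where "verts G = fst G"
definition edges :: "'a graph \<Rightarrow> 'a set set" where "edges G = snd G"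

definition simple_graph :: "'a graph \<Rightarrow> bool" where
  "simple_graph G \<longleftrightarrow> finite (verts G) \<and>
     (\<forall>e\<in>edges G. \<exists>u v. e = {u, v} \<and> u \<noteq> v \<and> u \<in> verts G \<and> v \<in> verts G)"

definition complete_graph :: "nat \<Rightarrow> nat graph" where
  "complete_graph n = ({0..<n}, {{u, v} | u v. u < n \<and> v < n \<and> u \<noteq> v})"

definition complete_minus_ham_cycle :: "nat \<Rightarrow> nat graph" where
  "complete_minus_ham_cycle n =
     ({0..<n}, edges (complete_graph n) - {{i, (i + 1) mod n} | i. i < n})"

definition complete_minus_matching :: "nat \<Rightarrow> nat \<Rightarrow> nat graph" where
  "complete_minus_matching n m =
     ({0..<n}, edges (complete_graph n) - {{2 * i, 2 * i + 1} | i. i < m})"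

definition connected_on :: "'a set \<Rightarrow> 'a set set \<Rightarrow> bool" where
  "connected_on W E \<longleftrightarrow>
     (\<forall>u\<in>W. \<forall>v\<in>W. (\<lambda>x y. x \<in> W \<and> y \<in> W \<and> {x, y} \<in> E)\<^sup>*\<^sup>* u v)"

definition vertex_connectivity :: "'a graph \<Rightarrow> nat" where
  "vertex_connectivity G = Min {card S | S. S \<subseteq> verts G \<and>
      (\<not> connected_on (verts G - S) (edges G) \<or> card (verts G - S) \<le> 1)}"

text \<open>Orientable genus via rotation systems (Heffter--Edmonds--Ringel rotation principle).  Faces are the orbits of the face-tracing permutation
  (u,v) \<mapsto> rho (v,u).\<close>

definition darts :: "'a set set \<Rightarrow> ('a \<times> 'a) set" where
  "darts E = {(u, v). {u, v} \<in> E \<and> u \<noteq> v}"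

definition orb :: "('b \<Rightarrow> 'b) \<Rightarrow> 'b \<Rightarrow> 'b set" where
  "orb f x = {(f ^^ n) x | n. True}"

definition is_rotation_system :: "'a set set \<Rightarrow> ('a \<times> 'a \<Rightarrow> 'a \<times> 'a) \<Rightarrow> bool" where
  "is_rotation_system E \<rho> \<longleftrightarrow> bij_betw \<rho> (darts E) (darts E) \<and>
     (\<forall>d\<in>darts E. fst (\<rho> d) = fst d \<and> orb \<rho> d = {d' \<in> darts E. fst d' = fst d})"

definition face_perm :: "('a \<times> 'a \<Rightarrow> 'a \<times> 'a) \<Rightarrow> 'a \<times> 'a \<Rightarrow> 'a \<times> 'a" where
  "face_perm \<rho> = (\<lambda>(u, v). \<rho> (v, u))"

definition num_faces :: "'a set set \<Rightarrow> ('a \<times> 'a \<Rightarrow> 'a \<times> 'a) \<Rightarrow> nat" where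
  "num_faces E \<rho> = card (orb (face_perm \<rho>) ` darts E)"

text \<open>Orientable genus of a connected graph: the least g such that some rotation system
  (i.e. some cellular embedding in an orientable surface) satisfies Euler's formula
  V - E + F = 2 - 2g.\<close>
definition orientable_genus :: "'a graph \<Rightarrow> nat" where
  "orientable_genus G = (LEAST g. \<exists>\<rho>. is_rotation_system (edges G) \<rho> \<and>
      int (card (verts G)) - int (card (edges G)) + int (num_faces (edges G) \<rho>)
        = 2 - 2 * int g)"

definition graph_iso :: "'a graph \<Rightarrow> 'b graph \<Rightarrow> bool" where
  "graph_iso G H \<longleftrightarrow> (\<exists>f. bij_betw f (verts G) (verts H) \<and>
     (\<forall>u\<in>verts G. \<forall>v\<in>verts G. {u, v} \<in> edges G \<longleftrightarrow> {f u, f v} \<in> edges H))"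

end

theory Submission
  imports Defs
begin

text \<open>Each face of a cellular embedding of a simple graph without vertices of degree one has at
  least three sides, so \<open>3F \<le> 2E\<close>, and Euler's formula \<open>V - E + F = 2 - 2g\<close> gives
  \<open>g \<ge> (E - 3V + 6) / 6\<close>. For \<open>K\<^sub>1\<^sub>0\<close>, \<open>K\<^sub>1\<^sub>2 - C\<^sub>1\<^sub>2\<close>, \<open>K\<^sub>1\<^sub>4\<close> and \<open>K\<^sub>1\<^sub>5 - 6K\<^sub>2\<close>
  this bound rounds up to 4, 4, 10 and 10, and explicit rotation systems attaining it, with their
  face boundaries as certificates, are checked by evaluation.

  For the connectivities, deleting all but one vertex of \<open>K\<^sub>n\<close>, all but a matched pair of
  \<open>K\<^sub>n - mK\<^sub>2\<close>, or all but three consecutive vertices of \<open>K\<^sub>n - C\<^sub>n\<close> leaves at most one vertex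
  or a disconnected graph. Deleting fewer vertices leaves at least 2, 3 or 4 vertices, among which
  any two non-adjacent ones are joined by a path of length at most 2, or 3 in the last case.

  The graphs in each pair have different orders, hence are not isomorphic.\<close>

section \<open>Orbits of a bijection of a finite set\<close>

lemma funpow_in_orb: "(f ^^ k) x \<in> orb f x"
  unfolding orb_def by blast

lemma self_in_orb: "x \<in> orb f x"
  using funpow_in_orb[of 0] by simp

lemma orb_subset: "bij_betw f A A \<Longrightarrow> x \<in> A \<Longrightarrow> orb f x \<subseteq> A"
  unfolding orb_def using bij_betwE[OF bij_betw_funpow] by blast

lemma orb_subset_orb: "y \<in> orb f x \<Longrightarrow> orb f y \<subseteq> orb f x"
  unfolding orb_def by (auto simp flip: funpow_add) (metis funpow_add o_apply)

lemma orb_fixpoint: "f x = x \<Longrightarrow> orb f x = {x}"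
proof -
  assume "f x = x"
  then have "(f ^^ k) x = x" for k by (induction k) auto
  then show ?thesis unfolding orb_def by auto
qed

lemma funpow_period:
  assumes "finite A" "bij_betw f A A" "x \<in> A"
  obtains p where "0 < p" "(f ^^ p) x = x"
proof -
  have "range (\<lambda>k. (f ^^ k) x) \<subseteq> A"
    using bij_betwE[OF bij_betw_funpow[OF assms(2)]] assms(3) by blast
  then have "\<not> inj (\<lambda>k. (f ^^ k) x)"
    using assms(1) finite_imageD finite_subset infinite_UNIV_nat by blast
  then obtain i j where ij: "i < j" "(f ^^ i) x = (f ^^ j) x"
    unfolding inj_def by (metis linorder_neqE_nat)
  have "(f ^^ i) ((f ^^ (j - i)) x) = (f ^^ i) x"
    using ij by (simp flip: funpow_add comp_apply[of "f ^^ i" "f ^^ (j - i)"])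
  moreover have "(f ^^ (j - i)) x \<in> A"
    using bij_betwE[OF bij_betw_funpow[OF assms(2)]] assms(3) by blast
  ultimately have "(f ^^ (j - i)) x = x"
    using bij_betw_imp_inj_on[OF bij_betw_funpow[OF assms(2)]] assms(3) by (meson inj_onD)
  with ij(1) show thesis by (intro that) simp_all
qed

lemma orb_eq:
  assumes "finite A" "bij_betw f A A" "x \<in> A" "y \<in> orb f x"
  shows "orb f y = orb f x"
proof
  show "orb f y \<subseteq> orb f x" using assms(4) by (rule orb_subset_orb)
  obtain k where y: "y = (f ^^ k) x" using assms(4) unfolding orb_def by blast
  obtain p where p: "0 < p" "(f ^^ p) x = x" using funpow_period[OF assms(1-3)] .
  have "(f ^^ (k * p)) x = x"
    using p(2) by (induction k) (simp_all add: funpow_add)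
  then have "(f ^^ (k * p - k)) y = x"
    using p(1) by (simp add: y flip: funpow_add comp_apply[of "f ^^ (k * p - k)" "f ^^ k"])
  then have "x \<in> orb f y" using funpow_in_orb by metis
  then show "orb f x \<subseteq> orb f y" by (rule orb_subset_orb)
qed

lemma card_eq_sum_card_orbs:
  assumes "finite A" "bij_betw f A A"
  shows "card A = (\<Sum>B\<in>orb f ` A. card B)"
proof -
  have "pairwise disjnt (orb f ` A)"
  proof (rule pairwiseI, clarify)
    fix x y assume "x \<in> A" "y \<in> A" "orb f x \<noteq> orb f y"
    show "disjnt (orb f x) (orb f y)"
    proof (unfold disjnt_iff, intro allI notI, elim conjE)
      fix z assume z: "z \<in> orb f x" "z \<in> orb f y"
      have "orb f z = orb f x" by (rule orb_eq[OF assms \<open>x \<in> A\<close> z(1)])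
      moreover have "orb f z = orb f y" by (rule orb_eq[OF assms \<open>y \<in> A\<close> z(2)])
      ultimately show False using \<open>orb f x \<noteq> orb f y\<close> by simp
    qed
  qed
  moreover have "finite B" if "B \<in> orb f ` A" for B
    using that orb_subset[OF assms(2)] rev_finite_subset[OF assms(1)] by auto
  ultimately have "card (\<Union>(orb f ` A)) = (\<Sum>B\<in>orb f ` A. card B)"
    by (rule card_Union_disjoint)
  moreover have "\<Union>(orb f ` A) = A"
    using orb_subset[OF assms(2)] self_in_orb by fastforce
  ultimately show ?thesis by simp
qed

lemma card_orbs_le:
  assumes "finite A" "bij_betw f A A" "\<And>x. x \<in> A \<Longrightarrow> k \<le> card (orb f x)"
  shows "k * card (orb f ` A) \<le> card A"
proof -
  have "k * card (orb f ` A) = (\<Sum>B\<in>orb f ` A. k)" by simp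
  also have "\<dots> \<le> (\<Sum>B\<in>orb f ` A. card B)" using assms(3) by (intro sum_mono) auto
  finally show ?thesis using card_eq_sum_card_orbs[OF assms(1,2)] by simp
qed

section \<open>Darts, faces and the Euler bound\<close>

lemma simple_graph_edgeE:
  assumes "simple_graph G" "e \<in> edges G"
  obtains u v where "e = {u, v}" "u \<noteq> v" "u \<in> verts G" "v \<in> verts G"
  using assms unfolding simple_graph_def by blast

lemma simple_graph_edges_subset: "simple_graph G \<Longrightarrow> edges G \<subseteq> Pow (verts G)"
  by (auto elim: simple_graph_edgeE)

lemma simple_graph_finite_edges:
  assumes "simple_graph G"
  shows "finite (edges G)"
proof (rule finite_subset)
  show "edges G \<subseteq> Pow (verts G)" using assms by (rule simple_graph_edges_subset)
  show "finite (Pow (verts G))" using assms by (simp add: simple_graph_def)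
qed

lemma darts_subset: "simple_graph G \<Longrightarrow> darts (edges G) \<subseteq> verts G \<times> verts G"
  using simple_graph_edges_subset unfolding darts_def by blast

lemma finite_darts:
  assumes "simple_graph G"
  shows "finite (darts (edges G))"
proof (rule finite_subset)
  show "darts (edges G) \<subseteq> verts G \<times> verts G" using assms by (rule darts_subset)
  show "finite (verts G \<times> verts G)" using assms by (simp add: simple_graph_def)
qed

lemma darts_sym: "(u, v) \<in> darts E \<Longrightarrow> (v, u) \<in> darts E"
  unfolding darts_def by (auto simp: insert_commute)

lemma bij_betw_swap_darts: "bij_betw prod.swap (darts E) (darts E)"
  by (rule bij_betw_byWitness[where f' = prod.swap]) (auto intro: darts_sym)

lemma card_darts:
  assumes "simple_graph G"
  shows "card (darts (edges G)) = 2 * card (edges G)"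
proof -
  define ends :: "'a set \<Rightarrow> ('a \<times> 'a) set" where "ends e = {(u, v). e = {u, v} \<and> u \<noteq> v}" for e
  have darts_eq: "darts (edges G) = (\<Union>e\<in>edges G. ends e)"
    unfolding darts_def ends_def by auto
  have card_ends: "card (ends e) = 2" and finite_ends: "finite (ends e)" if e: "e \<in> edges G" for e
  proof -
    obtain a b where "e = {a, b}" "a \<noteq> b"
      using simple_graph_edgeE[OF assms e] by metis
    then have "ends e = {(a, b), (b, a)}"
      unfolding ends_def by (auto simp: doubleton_eq_iff)
    with \<open>a \<noteq> b\<close> show "card (ends e) = 2" "finite (ends e)" by simp_all
  qed
  have "card (darts (edges G)) = (\<Sum>e\<in>edges G. card (ends e))"
    unfolding darts_eq
  proof (rule card_UN_disjoint)
    show "finite (edges G)" using assms by (rule simple_graph_finite_edges)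
    show "\<forall>e\<in>edges G. finite (ends e)" using finite_ends by blast
    show "\<forall>e\<in>edges G. \<forall>e'\<in>edges G. e \<noteq> e' \<longrightarrow> ends e \<inter> ends e' = {}"
      unfolding ends_def by blast
  qed
  then show ?thesis using card_ends by simp
qed

definition no_pendant_vertex :: "'a set set \<Rightarrow> bool" where
  "no_pendant_vertex E \<longleftrightarrow> (\<forall>(u, v)\<in>darts E. \<exists>w. w \<noteq> v \<and> (u, w) \<in> darts E)"

lemma face_perm_eq: "face_perm \<rho> = \<rho> \<circ> prod.swap"
  by (auto simp: face_perm_def)

lemma bij_betw_face_perm:
  assumes "is_rotation_system E \<rho>"
  shows "bij_betw (face_perm \<rho>) (darts E) (darts E)"
proof -
  have "bij_betw \<rho> (darts E) (darts E)"
    using assms unfolding is_rotation_system_def by simp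
  then show ?thesis
    unfolding face_perm_eq by (rule bij_betw_trans[OF bij_betw_swap_darts])
qed

text \<open>A face of length one or two would force a dart fixed by \<open>\<rho>\<close>, i.e. a vertex of degree one.\<close>

lemma card_face_ge_3:
  assumes fin: "finite (darts E)" and rot: "is_rotation_system E \<rho>"
    and deg: "no_pendant_vertex E" and d: "(u, v) \<in> darts E"
  shows "3 \<le> card (orb (face_perm \<rho>) (u, v))"
proof -
  let ?F = "face_perm \<rho>"
  have fst_rho: "fst (\<rho> x) = fst x" and orb_rho: "orb \<rho> x = {y \<in> darts E. fst y = fst x}"
    if "x \<in> darts E" for x
    using rot that unfolding is_rotation_system_def by auto
  have vu: "(v, u) \<in> darts E" using darts_sym[OF d] .
  define w where "w = snd (\<rho> (v, u))"
  have w: "?F (u, v) = (v, w)"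
    using fst_rho[OF vu] by (simp add: face_perm_def w_def prod_eq_iff)
  have "?F (u, v) \<in> darts E"
    using bij_betwE[OF bij_betw_face_perm[OF rot]] d by blast
  then have vw: "(v, w) \<in> darts E" by (simp only: w)
  define z where "z = snd (\<rho> (w, v))"
  have z: "?F (v, w) = (w, z)"
    using fst_rho[OF darts_sym[OF vw]] by (simp add: face_perm_def z_def prod_eq_iff)
  have "u \<noteq> v" "v \<noteq> w" using d vw by (auto simp: darts_def)
  moreover have "(w, z) \<noteq> (u, v)"
  proof
    assume "(w, z) = (u, v)"
    then have "\<rho> (v, u) = (v, u)" using w by (simp add: face_perm_def)
    then have "orb \<rho> (v, u) = {(v, u)}" by (rule orb_fixpoint)
    moreover obtain w' where "w' \<noteq> u" "(v, w') \<in> darts E"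
      using deg vu unfolding no_pendant_vertex_def by blast
    then have "(v, w') \<in> orb \<rho> (v, u)" "(v, w') \<noteq> (v, u)"
      using orb_rho[OF vu] by simp_all
    ultimately show False by simp
  qed
  ultimately have "card {(u, v), (v, w), (w, z)} = 3" by auto
  moreover have "{(u, v), (v, w), (w, z)} \<subseteq> orb ?F (u, v)"
    using self_in_orb funpow_in_orb[of 1 ?F "(u, v)"] funpow_in_orb[of 2 ?F "(u, v)"] w z
    by (simp add: numeral_2_eq_2)
  moreover have "finite (orb ?F (u, v))"
    using orb_subset[OF bij_betw_face_perm[OF rot] d] fin by (rule finite_subset)
  ultimately show ?thesis by (metis card_mono)
qed

lemma three_mul_num_faces_le:
  assumes "simple_graph G" "is_rotation_system (edges G) \<rho>" "no_pendant_vertex (edges G)"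
  shows "3 * num_faces (edges G) \<rho> \<le> 2 * card (edges G)"
proof -
  have "3 \<le> card (orb (face_perm \<rho>) d)" if "d \<in> darts (edges G)" for d
    using that card_face_ge_3[OF finite_darts[OF assms(1)] assms(2,3)] by (cases d) blast
  from card_orbs_le[OF finite_darts[OF assms(1)] bij_betw_face_perm[OF assms(2)] this]
  show ?thesis unfolding num_faces_def card_darts[OF assms(1)] .
qed

lemma euler_genus_lower_bound:
  assumes "simple_graph G" "is_rotation_system (edges G) \<rho>" "no_pendant_vertex (edges G)"
    and "int (card (verts G)) - int (card (edges G)) + int (num_faces (edges G) \<rho>) = 2 - 2 * int g"
  shows "int (card (edges G)) - 3 * int (card (verts G)) + 6 \<le> 6 * int g"
  using three_mul_num_faces_le[OF assms(1-3)] assms(4) by linarith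

text \<open>The last hypothesis puts \<open>g\<close> below the Euler bound \<open>(E - 3V + 6) / 6\<close> plus one, so no
  rotation system has smaller genus.\<close>

lemma orientable_genus_eqI:
  assumes "simple_graph G" "is_rotation_system (edges G) \<rho>" "no_pendant_vertex (edges G)"
    and "int (card (verts G)) - int (card (edges G)) + int (num_faces (edges G) \<rho>) = 2 - 2 * int g"
    and "6 * int g < int (card (edges G)) - 3 * int (card (verts G)) + 12"
  shows "orientable_genus G = g"
  unfolding orientable_genus_def
proof (rule Least_equality)
  show "\<exists>\<rho>. is_rotation_system (edges G) \<rho> \<and>
      int (card (verts G)) - int (card (edges G)) + int (num_faces (edges G) \<rho>) = 2 - 2 * int g"
    using assms(2,4) by blast
next
  fix g' assume "\<exists>\<rho>'. is_rotation_system (edges G) \<rho>' \<and>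
      int (card (verts G)) - int (card (edges G)) + int (num_faces (edges G) \<rho>') = 2 - 2 * int g'"
  then have "int (card (edges G)) - 3 * int (card (verts G)) + 6 \<le> 6 * int g'"
    using euler_genus_lower_bound[OF assms(1) _ assms(3)] by blast
  with assms(5) show "g \<le> g'" by linarith
qed

section \<open>Rotation systems given by lists\<close>

lemma funpow_cycle_nth:
  assumes "map f xs = rotate1 xs" "j < length xs"
  shows "(f ^^ k) (xs ! j) = xs ! ((j + k) mod length xs)"
proof (induction k)
  case 0
  show ?case using assms(2) by simp
next
  case (Suc k)
  have step: "f (xs ! i) = xs ! (Suc i mod length xs)" if "i < length xs" for i
    using that arg_cong[OF assms(1), of "\<lambda>ys. ys ! i"] by (simp add: nth_rotate1)
  have "(f ^^ Suc k) (xs ! j) = f (xs ! ((j + k) mod length xs))" using Suc by simp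
  also have "\<dots> = xs ! (Suc ((j + k) mod length xs) mod length xs)"
    by (intro step mod_less_divisor) (use assms(2) in linarith)
  also have "Suc ((j + k) mod length xs) mod length xs = (j + Suc k) mod length xs"
    by (simp add: mod_Suc_eq)
  finally show ?case .
qed

lemma orb_cycle:
  assumes "map f xs = rotate1 xs" "x \<in> set xs"
  shows "orb f x = set xs"
proof -
  obtain j where j: "j < length xs" "x = xs ! j" using assms(2) by (auto simp: in_set_conv_nth)
  then have "0 < length xs" by linarith
  then have "orb f x \<subseteq> set xs"
    unfolding orb_def j(2) funpow_cycle_nth[OF assms(1) j(1)] by auto
  moreover have "xs ! i \<in> orb f x" if "i < length xs" for i
  proof -
    have "(j + (i + length xs - j)) mod length xs = i" using that j(1) by simp
    then show ?thesis
      using funpow_in_orb[of "i + length xs - j" f x] funpow_cycle_nth[OF assms(1) j(1)] j(2)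
      by simp
  qed
  ultimately show ?thesis by (auto simp: in_set_conv_nth)
qed

lemma bij_betw_cycle:
  assumes "map f xs = rotate1 xs" "distinct xs"
  shows "bij_betw f (set xs) (set xs)"
proof (rule bij_betw_imageI)
  have "distinct (map f xs)" using assms by simp
  then show "inj_on f (set xs)" by (simp add: distinct_map)
  have "f ` set xs = set (rotate1 xs)" using arg_cong[OF assms(1), of set] by simp
  then show "f ` set xs = set xs" by simp
qed

definition cyclic_succ :: "'a list \<Rightarrow> 'a \<Rightarrow> 'a" where
  "cyclic_succ xs x = the (map_of (zip xs (rotate1 xs)) x)"

lemma map_cyclic_succ: "distinct xs \<Longrightarrow> map (cyclic_succ xs) xs = rotate1 xs"
  by (rule nth_equalityI) (simp_all add: cyclic_succ_def map_of_zip_nth)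

definition list_rotation :: "nat list list \<Rightarrow> nat \<times> nat \<Rightarrow> nat \<times> nat" where
  "list_rotation rot = (\<lambda>(u, v). (u, cyclic_succ (rot ! u) v))"

lemma funpow_list_rotation:
  "(list_rotation rot ^^ k) (u, v) = (u, (cyclic_succ (rot ! u) ^^ k) v)"
  by (induction k) (simp_all add: list_rotation_def)

lemma bij_betw_fibrewise:
  assumes "\<And>a. a \<in> A \<Longrightarrow> bij_betw (g a) (B a) (B a)"
  shows "bij_betw (\<lambda>(a, b). (a, g a b)) (Sigma A B) (Sigma A B)"
proof (rule bij_betw_imageI)
  show "inj_on (\<lambda>(a, b). (a, g a b)) (Sigma A B)"
  proof (rule inj_onI)
    fix x y assume xy: "x \<in> Sigma A B" "y \<in> Sigma A B"
      and eq: "(\<lambda>(a, b). (a, g a b)) x = (\<lambda>(a, b). (a, g a b)) y"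
    obtain a b a' b' where x: "x = (a, b)" and y: "y = (a', b')" by fastforce
    with xy eq have "a' = a" "a \<in> A" "b \<in> B a" "b' \<in> B a" "g a b = g a b'" by auto
    with bij_betw_imp_inj_on[OF assms] x y show "x = y" by (auto dest: inj_onD)
  qed
  show "(\<lambda>(a, b). (a, g a b)) ` Sigma A B = Sigma A B"
  proof
    show "(\<lambda>(a, b). (a, g a b)) ` Sigma A B \<subseteq> Sigma A B"
      using bij_betwE[OF assms] by auto
    show "Sigma A B \<subseteq> (\<lambda>(a, b). (a, g a b)) ` Sigma A B"
    proof clarify
      fix a b' assume "a \<in> A" "b' \<in> B a"
      with bij_betw_imp_surj_on[OF assms] obtain b where "b \<in> B a" "b' = g a b" by blast
      with \<open>a \<in> A\<close> show "(a, b') \<in> (\<lambda>(a, b). (a, g a b)) ` Sigma A B"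
        by (intro rev_image_eqI[of "(a, b)"]) simp_all
    qed
  qed
qed

lemma is_rotation_system_list_rotation:
  assumes darts: "darts E = (SIGMA u:{..<length rot}. set (rot ! u))"
    and dist: "\<And>u. u < length rot \<Longrightarrow> distinct (rot ! u)"
  shows "is_rotation_system E (list_rotation rot)"
proof -
  have "bij_betw (list_rotation rot) (darts E) (darts E)"
    unfolding darts list_rotation_def
    by (intro bij_betw_fibrewise bij_betw_cycle[OF map_cyclic_succ] dist) simp_all
  moreover have "orb (list_rotation rot) (u, v) = {d \<in> darts E. fst d = u}"
    if "(u, v) \<in> darts E" for u v
  proof -
    have "orb (list_rotation rot) (u, v) = Pair u ` orb (cyclic_succ (rot ! u)) v"
      unfolding orb_def funpow_list_rotation by auto
    also have "orb (cyclic_succ (rot ! u)) v = set (rot ! u)"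
      using that dist by (intro orb_cycle[OF map_cyclic_succ]) (simp_all add: darts)
    finally show ?thesis using that by (auto simp: darts)
  qed
  ultimately show ?thesis
    unfolding is_rotation_system_def by (auto simp: list_rotation_def)
qed

lemma no_pendant_vertex_list_rotation:
  assumes darts: "darts E = (SIGMA u:{..<length rot}. set (rot ! u))"
    and "\<And>u. u < length rot \<Longrightarrow> distinct (rot ! u) \<and> 2 \<le> length (rot ! u)"
  shows "no_pendant_vertex E"
  unfolding no_pendant_vertex_def
proof clarify
  fix u v assume "(u, v) \<in> darts E"
  then have u: "u < length rot" by (simp add: darts)
  then have "2 \<le> length (rot ! u)" "distinct (rot ! u)" using assms(2) by simp_all
  then obtain a b where "a \<noteq> b" "a \<in> set (rot ! u)" "b \<in> set (rot ! u)"
    by (metis Suc_le_length_iff distinct_length_2_or_more list.set_intros numeral_2_eq_2)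
  with u show "\<exists>w. w \<noteq> v \<and> (u, w) \<in> darts E"
    unfolding darts by (cases "a = v") auto
qed

lemma num_faces_eq_length:
  assumes cycles: "\<forall>f\<in>set fs. f \<noteq> [] \<and> map (face_perm \<rho>) f = rotate1 f"
    and dist: "distinct (concat fs)" and cover: "set (concat fs) = darts E"
  shows "num_faces E \<rho> = length fs"
proof -
  have orb_face: "orb (face_perm \<rho>) d = set f" if "f \<in> set fs" "d \<in> set f" for f d
  proof -
    have "map (face_perm \<rho>) f = rotate1 f" using cycles that(1) by simp
    from orb_cycle[OF this that(2)] show ?thesis .
  qed
  have "orb (face_perm \<rho>) ` darts E = set ` set fs"
  proof
    show "orb (face_perm \<rho>) ` darts E \<subseteq> set ` set fs"
    proof clarify
      fix d assume "d \<in> darts E"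
      then obtain f where "f \<in> set fs" "d \<in> set f" using cover by auto
      then show "orb (face_perm \<rho>) d \<in> set ` set fs" using orb_face by simp
    qed
    show "set ` set fs \<subseteq> orb (face_perm \<rho>) ` darts E"
    proof clarify
      fix f assume f: "f \<in> set fs"
      then have "hd f \<in> set f" using cycles by simp
      with f show "set f \<in> orb (face_perm \<rho>) ` darts E"
        using orb_face cover by (intro rev_image_eqI[of "hd f"]) auto
    qed
  qed
  moreover have nonempty: "[] \<notin> set fs" using cycles by blast
  then have "inj_on set (set fs)"
    using dist unfolding distinct_concat_iff by (intro inj_onI) fastforce
  moreover have "distinct fs"
    using dist nonempty unfolding distinct_concat_iff by (simp add: removeAll_id)
  ultimately show ?thesis
    unfolding num_faces_def by (simp add: card_image distinct_card)
qed

text \<open>In a certificate, \<open>rot ! u\<close> lists the neighbours of \<open>u\<close> in rotation order, \<open>fs\<close> lists the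
  face boundaries as cycles of darts, and \<open>idx ! u ! v\<close> is the position of the dart \<open>(u, v)\<close> in
  \<open>concat fs\<close>; this inverse table makes the distinctness of the darts cheap to evaluate.\<close>

definition rotation_certificate ::
  "nat \<Rightarrow> (nat \<Rightarrow> nat \<Rightarrow> bool) \<Rightarrow> nat list list \<Rightarrow> (nat \<times> nat) list list \<Rightarrow> nat list list \<Rightarrow> bool"
where
  "rotation_certificate n adj rot fs idx \<longleftrightarrow>
     length rot = n \<and>
     (\<forall>u\<in>set [0..<n]. distinct (rot ! u) \<and> 2 \<le> length (rot ! u) \<and>
        (\<forall>v\<in>set (rot ! u). v < n) \<and> (\<forall>v\<in>set [0..<n]. adj u v \<longleftrightarrow> v \<in> set (rot ! u))) \<and>
     (\<forall>f\<in>set fs. f \<noteq> [] \<and> map (face_perm (list_rotation rot)) f = rotate1 f) \<and>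
     (\<forall>(u, v)\<in>set (concat fs). u < n \<and> v < n \<and> adj u v) \<and>
     map (\<lambda>(u, v). idx ! u ! v) (concat fs) = [0..<length (concat fs)] \<and>
     length (concat fs) = length (filter (case_prod adj) (List.product [0..<n] [0..<n]))"

lemma rotation_certificate_sound:
  assumes cert: "rotation_certificate n adj rot fs idx"
    and darts: "darts E = {(u, v). u < n \<and> v < n \<and> adj u v}"
  shows "is_rotation_system E (list_rotation rot)"
    and "num_faces E (list_rotation rot) = length fs"
    and "card (darts E) = length (concat fs)"
    and "no_pendant_vertex E"
proof -
  have len: "length rot = n"
    and rot: "\<And>u. u < n \<Longrightarrow> distinct (rot ! u) \<and> 2 \<le> length (rot ! u) \<and>
        set (rot ! u) = {v. v < n \<and> adj u v}"
    and cycles: "\<forall>f\<in>set fs. f \<noteq> [] \<and> map (face_perm (list_rotation rot)) f = rotate1 f"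
    and in_darts: "set (concat fs) \<subseteq> darts E"
    and index: "map (\<lambda>(u, v). idx ! u ! v) (concat fs) = [0..<length (concat fs)]"
    and count: "length (concat fs) = length (filter (case_prod adj) (List.product [0..<n] [0..<n]))"
    using cert unfolding rotation_certificate_def darts by auto
  have darts_rot: "darts E = (SIGMA u:{..<length rot}. set (rot ! u))"
    unfolding darts len using rot by auto
  show "is_rotation_system E (list_rotation rot)"
    by (rule is_rotation_system_list_rotation[OF darts_rot]) (use len rot in auto)
  show "no_pendant_vertex E"
    by (rule no_pendant_vertex_list_rotation[OF darts_rot]) (use len rot in auto)
  have darts_list: "darts E = set (filter (case_prod adj) (List.product [0..<n] [0..<n]))"
    unfolding darts by auto
  have "distinct (filter (case_prod adj) (List.product [0..<n] [0..<n]))"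
    by (intro distinct_filter distinct_product) simp_all
  then show card_darts: "card (darts E) = length (concat fs)"
    unfolding darts_list count by (rule distinct_card)
  have "distinct (map (\<lambda>(u, v). idx ! u ! v) (concat fs))" unfolding index by simp
  then have dist: "distinct (concat fs)" by (simp add: distinct_map)
  have "set (concat fs) = darts E"
    using card_subset_eq[OF _ in_darts] card_darts distinct_card[OF dist] darts_list by simp
  then show "num_faces E (list_rotation rot) = length fs"
    by (rule num_faces_eq_length[OF cycles dist])
qed

lemma orientable_genus_by_certificate:
  assumes "simple_graph G" "card (verts G) = n"
    and "darts (edges G) = {(u, v). u < n \<and> v < n \<and> adj u v}"
    and "rotation_certificate n adj rot fs idx"
    and "int n - int (length (concat fs) div 2) + int (length fs) = 2 - 2 * int g"
    and "6 * int g < int (length (concat fs) div 2) - 3 * int n + 12"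
  shows "orientable_genus G = g"
proof -
  note sound = rotation_certificate_sound[OF assms(4,3)]
  have "card (edges G) = length (concat fs) div 2"
    using card_darts[OF assms(1)] sound(3) by simp
  with assms(2,5,6) sound(2) show ?thesis
    by (intro orientable_genus_eqI[OF assms(1) sound(1,4)]) simp_all
qed

section \<open>The three graph families\<close>

lemma simple_graph_subgraph:
  assumes "simple_graph G" "verts H = verts G" "edges H \<subseteq> edges G"
  shows "simple_graph H"
  using assms unfolding simple_graph_def by (metis subsetD)

lemma verts_complete_graph: "verts (complete_graph n) = {0..<n}"
  by (simp add: complete_graph_def verts_def)

lemma complete_graph_edge_iff: "{u, v} \<in> edges (complete_graph n) \<longleftrightarrow> u < n \<and> v < n \<and> u \<noteq> v"
  by (auto simp: complete_graph_def edges_def doubleton_eq_iff)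

lemma simple_graph_complete_graph: "simple_graph (complete_graph n)"
  by (auto simp: simple_graph_def complete_graph_def verts_def edges_def)

definition consecutive :: "nat \<Rightarrow> nat \<Rightarrow> nat \<Rightarrow> bool" where
  "consecutive n u v \<longleftrightarrow> v = Suc u mod n \<or> u = Suc v mod n"

lemma verts_complete_minus_ham_cycle: "verts (complete_minus_ham_cycle n) = {0..<n}"
  by (simp add: complete_minus_ham_cycle_def verts_def)

lemma edges_complete_minus_ham_cycle:
  "edges (complete_minus_ham_cycle n) = edges (complete_graph n) - {{i, (i + 1) mod n} | i. i < n}"
  by (simp add: complete_minus_ham_cycle_def edges_def)

lemma complete_minus_ham_cycle_edge_iff:
  "{u, v} \<in> edges (complete_minus_ham_cycle n) \<longleftrightarrow>
     u < n \<and> v < n \<and> u \<noteq> v \<and> \<not> consecutive n u v"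
proof -
  have "{u, v} \<in> {{i, (i + 1) mod n} | i. i < n} \<longleftrightarrow> consecutive n u v" if "u < n" "v < n"
    using that unfolding consecutive_def by (auto simp: doubleton_eq_iff)
  then show ?thesis
    unfolding edges_complete_minus_ham_cycle by (auto simp: complete_graph_edge_iff)
qed

lemma simple_graph_complete_minus_ham_cycle: "simple_graph (complete_minus_ham_cycle n)"
  by (rule simple_graph_subgraph[OF simple_graph_complete_graph])
    (auto simp: verts_complete_minus_ham_cycle verts_complete_graph edges_complete_minus_ham_cycle)

definition matched :: "nat \<Rightarrow> nat \<Rightarrow> nat \<Rightarrow> bool" where
  "matched m u v \<longleftrightarrow> u div 2 = v div 2 \<and> u div 2 < m"

lemma verts_complete_minus_matching: "verts (complete_minus_matching n m) = {0..<n}"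
  by (simp add: complete_minus_matching_def verts_def)

lemma edges_complete_minus_matching:
  "edges (complete_minus_matching n m) = edges (complete_graph n) - {{2 * i, 2 * i + 1} | i. i < m}"
  by (simp add: complete_minus_matching_def edges_def)

lemma matching_edge_iff:
  fixes u v :: nat
  assumes "u \<noteq> v"
  shows "{u, v} \<in> {{2 * i, 2 * i + 1} | i. i < m} \<longleftrightarrow> matched m u v"
proof
  assume "{u, v} \<in> {{2 * i, 2 * i + 1} | i. i < m}"
  then obtain i where "i < m" "{u, v} = {2 * i, 2 * i + 1}" by blast
  then show "matched m u v" unfolding matched_def by (auto simp: doubleton_eq_iff)
next
  assume "matched m u v"
  then have "u div 2 = v div 2" "u div 2 < m" by (simp_all add: matched_def)
  moreover have "u = 2 * (u div 2) \<or> u = 2 * (u div 2) + 1" "v = 2 * (v div 2) \<or> v = 2 * (v div 2) + 1"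
    by presburger+
  ultimately have "{u, v} = {2 * (u div 2), 2 * (u div 2) + 1}"
    using assms by (auto simp: doubleton_eq_iff)
  with \<open>u div 2 < m\<close> show "{u, v} \<in> {{2 * i, 2 * i + 1} | i. i < m}" by blast
qed

lemma three_distinct_div_2:
  fixes a b c :: nat
  assumes "a \<noteq> b" "a \<noteq> c" "b \<noteq> c"
  shows "a div 2 \<noteq> b div 2 \<or> a div 2 \<noteq> c div 2"
proof -
  have "a = 2 * (a div 2) + a mod 2" "b = 2 * (b div 2) + b mod 2" "c = 2 * (c div 2) + c mod 2"
    by simp_all
  moreover have "a mod 2 < 2" "b mod 2 < 2" "c mod 2 < 2" by simp_all
  ultimately show ?thesis using assms by linarith
qed

lemma complete_minus_matching_edge_iff:
  "{u, v} \<in> edges (complete_minus_matching n m) \<longleftrightarrow>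
     u < n \<and> v < n \<and> u \<noteq> v \<and> \<not> matched m u v"
proof (cases "u = v")
  case True
  then show ?thesis
    using complete_graph_edge_iff[of v v n] by (simp add: edges_complete_minus_matching)
next
  case False
  then show ?thesis
    unfolding edges_complete_minus_matching Diff_iff matching_edge_iff[OF False]
    by (simp add: complete_graph_edge_iff)
qed

lemma simple_graph_complete_minus_matching: "simple_graph (complete_minus_matching n m)"
  by (rule simple_graph_subgraph[OF simple_graph_complete_graph])
    (auto simp: verts_complete_minus_matching verts_complete_graph edges_complete_minus_matching)

lemma darts_complete_graph:
  "darts (edges (complete_graph n)) = {(u, v). u < n \<and> v < n \<and> u \<noteq> v}"
  by (auto simp: darts_def complete_graph_edge_iff)

lemma darts_complete_minus_ham_cycle:
  "darts (edges (complete_minus_ham_cycle n)) =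
     {(u, v). u < n \<and> v < n \<and> u \<noteq> v \<and> \<not> consecutive n u v}"
  by (auto simp: darts_def complete_minus_ham_cycle_edge_iff)

lemma darts_complete_minus_matching:
  "darts (edges (complete_minus_matching n m)) =
     {(u, v). u < n \<and> v < n \<and> u \<noteq> v \<and> \<not> matched m u v}"
  by (auto simp: darts_def complete_minus_matching_edge_iff)

lemma graph_iso_card_verts: "graph_iso G H \<Longrightarrow> card (verts G) = card (verts H)"
  unfolding graph_iso_def by (auto dest: bij_betw_same_card)

section \<open>Vertex connectivity\<close>

definition is_vertex_cut :: "'a graph \<Rightarrow> 'a set \<Rightarrow> bool" where
  "is_vertex_cut G S \<longleftrightarrow>
     S \<subseteq> verts G \<and> (\<not> connected_on (verts G - S) (edges G) \<or> card (verts G - S) \<le> 1)"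

lemma vertex_connectivity_eqI:
  assumes "finite (verts G)" "is_vertex_cut G S"
    and "\<And>T. T \<subseteq> verts G \<Longrightarrow> card T < card S \<Longrightarrow> \<not> is_vertex_cut G T"
  shows "vertex_connectivity G = card S"
proof -
  have "{card S | S. is_vertex_cut G S} = card ` {S. is_vertex_cut G S}" by blast
  then have "vertex_connectivity G = Min (card ` {S. is_vertex_cut G S})"
    unfolding vertex_connectivity_def is_vertex_cut_def by simp
  also have "\<dots> = card S"
  proof (rule Min_eqI)
    have "card ` {S. is_vertex_cut G S} \<subseteq> card ` Pow (verts G)"
      by (intro image_mono) (auto simp: is_vertex_cut_def)
    then show "finite (card ` {S. is_vertex_cut G S})"
      by (rule finite_subset) (simp add: assms(1))
    show "card S \<le> k" if "k \<in> card ` {S. is_vertex_cut G S}" for k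
    proof -
      from that obtain T where T: "k = card T" "is_vertex_cut G T" by blast
      then have "T \<subseteq> verts G" by (simp add: is_vertex_cut_def)
      with T assms(3)[of T] show ?thesis by linarith
    qed
    show "card S \<in> card ` {S. is_vertex_cut G S}" using assms(2) by blast
  qed
  finally show ?thesis .
qed

definition adj_in :: "'a set \<Rightarrow> 'a set set \<Rightarrow> 'a \<Rightarrow> 'a \<Rightarrow> bool" where
  "adj_in W E x y \<longleftrightarrow> x \<in> W \<and> y \<in> W \<and> {x, y} \<in> E"

lemma connected_on_iff_adj_in: "connected_on W E \<longleftrightarrow> (\<forall>u\<in>W. \<forall>v\<in>W. (adj_in W E)\<^sup>*\<^sup>* u v)"
  unfolding connected_on_def adj_in_def[abs_def] by (rule refl)

lemma symp_adj_in: "symp (adj_in W E)"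
  by (rule sympI) (auto simp: adj_in_def insert_commute)

lemma connected_onI:
  assumes "\<And>u v. u \<in> W \<Longrightarrow> v \<in> W \<Longrightarrow> u \<noteq> v \<Longrightarrow> {u, v} \<notin> E \<Longrightarrow> (adj_in W E)\<^sup>*\<^sup>* u v"
  shows "connected_on W E"
  unfolding connected_on_iff_adj_in
proof (intro ballI)
  fix u v assume "u \<in> W" "v \<in> W"
  then show "(adj_in W E)\<^sup>*\<^sup>* u v"
    using assms by (cases "u = v \<or> {u, v} \<in> E") (auto simp: adj_in_def)
qed

lemma connected_on_if_common_neighbours:
  assumes "\<And>u v. u \<in> W \<Longrightarrow> v \<in> W \<Longrightarrow> u \<noteq> v \<Longrightarrow> {u, v} \<notin> E \<Longrightarrow>
      \<exists>w\<in>W. {u, w} \<in> E \<and> {w, v} \<in> E"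
  shows "connected_on W E"
proof (rule connected_onI)
  fix u v assume "u \<in> W" "v \<in> W" "u \<noteq> v" "{u, v} \<notin> E"
  then obtain w where "adj_in W E u w" "adj_in W E w v"
    using assms unfolding adj_in_def by blast
  then show "(adj_in W E)\<^sup>*\<^sup>* u v" by (meson r_into_rtranclp rtranclp.rtrancl_into_rtrancl)
qed

lemma not_connected_on_if_isolated:
  assumes "u \<in> W" "v \<in> W" "u \<noteq> v" "\<And>w. w \<in> W \<Longrightarrow> {u, w} \<notin> E"
  shows "\<not> connected_on W E"
proof -
  have "\<not> (adj_in W E)\<^sup>*\<^sup>* u v"
  proof
    assume "(adj_in W E)\<^sup>*\<^sup>* u v"
    then show False
    proof (cases rule: converse_rtranclpE)
      case base
      with assms(3) show False by simp
    next
      case (step w)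
      with assms(4)[of w] show False by (simp add: adj_in_def)
    qed
  qed
  with assms(1,2) show ?thesis unfolding connected_on_iff_adj_in by blast
qed

lemma card_interval_minus: "T \<subseteq> {0..<n} \<Longrightarrow> card ({0..<n} - T) = n - card T"
  by (simp add: card_Diff_subset finite_subset)

theorem vertex_connectivity_complete_graph: "vertex_connectivity (complete_graph n) = n - 1"
proof -
  have "vertex_connectivity (complete_graph n) = card {0..<n - 1}"
  proof (rule vertex_connectivity_eqI)
    show "finite (verts (complete_graph n))" by (simp add: verts_complete_graph)
    show "is_vertex_cut (complete_graph n) {0..<n - 1}"
      unfolding is_vertex_cut_def verts_complete_graph by (auto simp: card_interval_minus)
    fix T assume T: "T \<subseteq> verts (complete_graph n)" "card T < card {0..<n - 1}"
    have "connected_on ({0..<n} - T) (edges (complete_graph n))"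
      by (rule connected_onI) (auto simp: complete_graph_edge_iff)
    with T show "\<not> is_vertex_cut (complete_graph n) T"
      unfolding is_vertex_cut_def verts_complete_graph by (auto simp: card_interval_minus)
  qed
  then show ?thesis by simp
qed

text \<open>A vertex is matched to at most one other, so any third vertex is a common neighbour.\<close>

lemma connected_on_complete_minus_matching:
  assumes W: "W \<subseteq> {0..<n}" "3 \<le> card W"
  shows "connected_on W (edges (complete_minus_matching n m))"
proof (rule connected_on_if_common_neighbours)
  let ?E = "edges (complete_minus_matching n m)"
  fix u v assume uv: "u \<in> W" "v \<in> W" "u \<noteq> v" "{u, v} \<notin> ?E"
  with W(1) have "matched m u v" by (auto simp: complete_minus_matching_edge_iff)
  have "\<not> W \<subseteq> {u, v}"
  proof
    assume "W \<subseteq> {u, v}"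
    then have "card W \<le> card (set [u, v])" by (intro card_mono) simp_all
    with W(2) card_length[of "[u, v]"] show False by simp
  qed
  then obtain w where w: "w \<in> W" "w \<noteq> u" "w \<noteq> v" by blast
  have "\<not> matched m u w" "\<not> matched m w v"
    using \<open>matched m u v\<close> three_distinct_div_2[of w u v] w(2,3) uv(3)
    unfolding matched_def by auto
  moreover have "u < n" "v < n" "w < n" using uv(1,2) w(1) W(1) by auto
  ultimately show "\<exists>w\<in>W. {u, w} \<in> ?E \<and> {w, v} \<in> ?E"
    using uv(3) w by (auto simp: complete_minus_matching_edge_iff)
qed

theorem vertex_connectivity_complete_minus_matching:
  assumes "1 \<le> m" "2 \<le> n"
  shows "vertex_connectivity (complete_minus_matching n m) = n - 2"
proof -
  let ?G = "complete_minus_matching n m"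
  have "vertex_connectivity ?G = card {2..<n}"
  proof (rule vertex_connectivity_eqI)
    show "finite (verts ?G)" by (simp add: verts_complete_minus_matching)
    have "verts ?G - {2..<n} = {0, 1}" using assms(2) by (auto simp: verts_complete_minus_matching)
    moreover have "\<not> connected_on {0, 1} (edges ?G)"
      using assms(1) by (intro not_connected_on_if_isolated[of 0 _ 1])
        (auto simp: complete_minus_matching_edge_iff matched_def)
    ultimately show "is_vertex_cut ?G {2..<n}"
      unfolding is_vertex_cut_def by (auto simp: verts_complete_minus_matching)
    fix T assume T: "T \<subseteq> verts ?G" "card T < card {2..<n}"
    then have "3 \<le> card ({0..<n} - T)"
      by (simp add: verts_complete_minus_matching card_interval_minus)
    moreover from this have "connected_on ({0..<n} - T) (edges ?G)"
      by (intro connected_on_complete_minus_matching) auto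
    ultimately show "\<not> is_vertex_cut ?G T"
      unfolding is_vertex_cut_def verts_complete_minus_matching by auto
  qed
  then show ?thesis by simp
qed

lemma Suc_mod_eq_if: "x < n \<Longrightarrow> Suc x mod n = (if Suc x = n then 0 else Suc x)"
  by simp

lemma not_consecutive_around:
  assumes "u < n" "w < n" "w \<noteq> u" "w \<noteq> Suc u mod n"
    "w \<noteq> (if u = 0 then n - 1 else u - 1)" "w \<noteq> Suc (Suc u mod n) mod n"
  shows "\<not> consecutive n u w \<and> \<not> consecutive n w (Suc u mod n)"
  using assms unfolding consecutive_def by (auto simp: Suc_mod_eq_if split: if_splits)

lemma not_consecutive_detour:
  assumes "5 \<le> n" "u < n"
  defines "a \<equiv> if u = 0 then n - 1 else u - 1" and "b \<equiv> Suc (Suc u mod n) mod n"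
  shows "u \<noteq> b \<and> \<not> consecutive n u b \<and> b \<noteq> a \<and> \<not> consecutive n b a \<and>
    a \<noteq> Suc u mod n \<and> \<not> consecutive n a (Suc u mod n)"
  using assms unfolding consecutive_def by (auto simp: Suc_mod_eq_if split: if_splits)

text \<open>Consecutive vertices \<open>u\<close>, \<open>u + 1\<close> have a common neighbour outside \<open>u - 1, \<dots>, u + 2\<close>;
  if nothing else is left, \<open>u, u + 2, u - 1, u + 1\<close> is a path, since \<open>n \<ge> 5\<close>.\<close>

lemma walk_to_successor:
  assumes n: "5 \<le> n" and W: "W \<subseteq> {0..<n}" "4 \<le> card W" and u: "u \<in> W" "Suc u mod n \<in> W"
  shows "(adj_in W (edges (complete_minus_ham_cycle n)))\<^sup>*\<^sup>* u (Suc u mod n)"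
proof -
  let ?R = "adj_in W (edges (complete_minus_ham_cycle n))" and ?v = "Suc u mod n"
  define a where "a = (if u = 0 then n - 1 else u - 1)"
  define b where "b = Suc ?v mod n"
  have "u < n" "a < n" "b < n" using u W n by (auto simp: a_def b_def)
  consider (outside) w where "w \<in> W" "w \<notin> {a, u, ?v, b}" | (inside) "W \<subseteq> {a, u, ?v, b}"
    by blast
  then show ?thesis
  proof cases
    case (outside w)
    with W have "w < n" by auto
    with outside \<open>u < n\<close> have "\<not> consecutive n u w \<and> \<not> consecutive n w ?v"
      by (intro not_consecutive_around) (auto simp: a_def b_def)
    with outside u W \<open>u < n\<close> \<open>w < n\<close> have "?R u w" "?R w ?v"
      by (auto simp: adj_in_def complete_minus_ham_cycle_edge_iff)
    then show ?thesis by (meson r_into_rtranclp rtranclp.rtrancl_into_rtrancl)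
  next
    case inside
    have "card {a, u, ?v, b} \<le> card W"
      using W(2) card_length[of "[a, u, ?v, b]"] by simp
    then have "W = {a, u, ?v, b}" using inside by (intro card_seteq) simp_all
    with not_consecutive_detour[OF n \<open>u < n\<close>] u \<open>u < n\<close> \<open>a < n\<close> \<open>b < n\<close>
    have "?R u b" "?R b a" "?R a ?v"
      unfolding a_def b_def by (auto simp: adj_in_def complete_minus_ham_cycle_edge_iff)
    then show ?thesis by (meson r_into_rtranclp rtranclp.rtrancl_into_rtrancl)
  qed
qed

lemma connected_on_complete_minus_ham_cycle:
  assumes n: "5 \<le> n" and W: "W \<subseteq> {0..<n}" "4 \<le> card W"
  shows "connected_on W (edges (complete_minus_ham_cycle n))"
proof (rule connected_onI)
  let ?R = "adj_in W (edges (complete_minus_ham_cycle n))"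
  fix u v assume uv: "u \<in> W" "v \<in> W" "u \<noteq> v" "{u, v} \<notin> edges (complete_minus_ham_cycle n)"
  with W(1) have "v = Suc u mod n \<or> u = Suc v mod n"
    by (auto simp: complete_minus_ham_cycle_edge_iff consecutive_def)
  then show "?R\<^sup>*\<^sup>* u v"
  proof
    assume "v = Suc u mod n"
    with uv walk_to_successor[OF n W] show ?thesis by simp
  next
    assume "u = Suc v mod n"
    with uv walk_to_successor[OF n W] have "?R\<^sup>*\<^sup>* v u" by simp
    then show ?thesis by (rule sympD[OF symp_rtranclp[OF symp_adj_in]])
  qed
qed

theorem vertex_connectivity_complete_minus_ham_cycle:
  assumes n: "5 \<le> n"
  shows "vertex_connectivity (complete_minus_ham_cycle n) = n - 3"
proof -
  let ?G = "complete_minus_ham_cycle n"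
  have "vertex_connectivity ?G = card {2..<n - 1}"
  proof (rule vertex_connectivity_eqI)
    show "finite (verts ?G)" by (simp add: verts_complete_minus_ham_cycle)
    have "verts ?G - {2..<n - 1} = {0, 1, n - 1}"
      using n by (auto simp: verts_complete_minus_ham_cycle)
    moreover have "\<not> connected_on {0, 1, n - 1} (edges ?G)"
      using n by (intro not_connected_on_if_isolated[of 0 _ 1])
        (auto simp: complete_minus_ham_cycle_edge_iff consecutive_def)
    ultimately show "is_vertex_cut ?G {2..<n - 1}"
      unfolding is_vertex_cut_def by (auto simp: verts_complete_minus_ham_cycle)
    fix T assume T: "T \<subseteq> verts ?G" "card T < card {2..<n - 1}"
    then have "4 \<le> card ({0..<n} - T)"
      by (simp add: verts_complete_minus_ham_cycle card_interval_minus)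
    moreover from this have "connected_on ({0..<n} - T) (edges ?G)"
      by (intro connected_on_complete_minus_ham_cycle n) auto
    ultimately show "\<not> is_vertex_cut ?G T"
      unfolding is_vertex_cut_def verts_complete_minus_ham_cycle by auto
  qed
  then show ?thesis by simp
qed

section \<open>Minimum genus embeddings\<close>

definition rotation_K10 :: "nat list list" where
  "rotation_K10 =
    [[1, 5, 9, 6, 3, 7, 4, 8, 2], [0, 2, 4, 5, 3, 6, 8, 9, 7], [0, 8, 7, 3, 9, 5, 6, 4, 1],
     [0, 1, 5, 8, 4, 6, 9, 2, 7], [0, 7, 9, 5, 1, 2, 6, 3, 8], [0, 7, 6, 2, 9, 8, 3, 1, 4],
     [0, 9, 3, 4, 2, 5, 7, 8, 1], [0, 3, 2, 8, 6, 5, 1, 9, 4], [0, 4, 3, 5, 9, 1, 6, 7, 2],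
     [0, 4, 7, 1, 8, 5, 2, 3, 6]]"

definition faces_K10 :: "(nat \<times> nat) list list" where
  "faces_K10 =
    [[(0,1), (1,2), (2,0)], [(0,5), (5,7), (7,1), (1,0)], [(0,9), (9,4), (4,5), (5,0)],
     [(0,6), (6,9), (9,0)], [(0,3), (3,1), (1,6), (6,0)], [(0,7), (7,3), (3,0)],
     [(0,4), (4,7), (7,0)], [(0,8), (8,4), (4,0)], [(0,2), (2,8), (8,0)], [(1,4), (4,2), (2,1)],
     [(1,5), (5,4), (4,1)], [(1,3), (3,5), (5,1)], [(1,8), (8,6), (6,1)], [(1,9), (9,8), (8,1)],
     [(1,7), (7,9), (9,1)], [(2,7), (7,8), (8,2)], [(2,3), (3,7), (7,2)], [(2,9), (9,3), (3,2)],
     [(2,5), (5,9), (9,2)], [(2,6), (6,5), (5,2)], [(2,4), (4,6), (6,2)], [(3,8), (8,5), (5,3)],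
     [(3,4), (4,8), (8,3)], [(3,6), (6,4), (4,3)], [(3,9), (9,6), (6,3)], [(4,9), (9,7), (7,4)],
     [(5,6), (6,7), (7,5)], [(5,8), (8,9), (9,5)], [(6,8), (8,7), (7,6)]]"

definition dart_index_K10 :: "nat list list" where
  "dart_index_K10 =
    [[0, 0, 27, 14, 21, 3, 11, 18, 24, 7], [6, 0, 1, 36, 30, 33, 16, 45, 39, 42],
     [2, 32, 0, 51, 63, 57, 60, 48, 28, 54], [20, 15, 56, 0, 69, 37, 72, 52, 66, 75],
     [26, 35, 31, 74, 0, 9, 64, 22, 70, 78], [10, 38, 62, 68, 34, 0, 81, 4, 84, 58],
     [17, 41, 65, 77, 73, 61, 0, 82, 87, 12], [23, 5, 53, 19, 80, 83, 89, 0, 49, 46],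
     [29, 44, 50, 71, 25, 67, 40, 88, 0, 85], [13, 47, 59, 55, 8, 86, 76, 79, 43, 0]]"

lemma rotation_certificate_K10:
  "rotation_certificate 10 (\<lambda>u v. u \<noteq> v) rotation_K10 faces_K10 dart_index_K10"
  by code_simp

lemma face_counts_K10: "length (concat faces_K10) = 90" "length faces_K10 = 29"
  by code_simp+

lemma orientable_genus_complete_graph_10:
  "orientable_genus (complete_graph 10) = 4"
  by (rule orientable_genus_by_certificate[OF simple_graph_complete_graph _
        darts_complete_graph rotation_certificate_K10])
    (simp_all add: verts_complete_graph face_counts_K10)

definition rotation_C12 :: "nat list list" where
  "rotation_C12 =
    [[2, 9, 4, 8, 3, 6, 10, 5, 7], [3, 10, 7, 9, 5, 8, 4, 6, 11], [0, 7, 4, 11, 5, 10, 8, 6, 9],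
     [0, 8, 10, 1, 11, 7, 5, 9, 6], [0, 9, 11, 2, 7, 10, 6, 1, 8], [0, 10, 2, 11, 8, 1, 9, 3, 7],
     [0, 3, 9, 2, 8, 11, 1, 4, 10], [0, 5, 3, 11, 9, 1, 10, 4, 2], [0, 4, 1, 5, 11, 6, 2, 10, 3],
     [0, 2, 6, 3, 5, 1, 7, 11, 4], [0, 6, 4, 7, 1, 3, 8, 2, 5], [1, 6, 8, 5, 2, 4, 9, 7, 3]]"

definition faces_C12 :: "(nat \<times> nat) list list" where
  "faces_C12 =
    [[(0,2), (2,7), (7,0)], [(0,9), (9,2), (2,0)], [(0,4), (4,9), (9,0)], [(0,8), (8,4), (4,0)],
     [(0,3), (3,8), (8,0)], [(0,6), (6,3), (3,0)], [(0,10), (10,6), (6,0)],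
     [(0,5), (5,10), (10,0)], [(0,7), (7,5), (5,0)], [(1,3), (3,11), (11,1)],
     [(1,10), (10,3), (3,1)], [(1,7), (7,10), (10,1)], [(1,9), (9,7), (7,1)],
     [(1,5), (5,9), (9,1)], [(1,8), (8,5), (5,1)], [(1,4), (4,8), (8,1)], [(1,6), (6,4), (4,1)],
     [(1,11), (11,6), (6,1)], [(2,4), (4,7), (7,2)], [(2,11), (11,4), (4,2)],
     [(2,5), (5,11), (11,2)], [(2,10), (10,5), (5,2)], [(2,8), (8,10), (10,2)],
     [(2,6), (6,8), (8,2)], [(2,9), (9,6), (6,2)], [(3,10), (10,8), (8,3)],
     [(3,7), (7,11), (11,3)], [(3,5), (5,7), (7,3)], [(3,9), (9,5), (5,3)],
     [(3,6), (6,9), (9,3)], [(4,11), (11,9), (9,4)], [(4,10), (10,7), (7,4)],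
     [(4,6), (6,10), (10,4)], [(5,8), (8,11), (11,5)], [(6,11), (11,8), (8,6)],
     [(7,9), (9,11), (11,7)]]"

definition dart_index_C12 :: "nat list list" where
  "dart_index_C12 =
    [[0, 0, 0, 12, 6, 21, 15, 24, 9, 3, 18, 0], [0, 0, 0, 27, 45, 39, 48, 33, 42, 36, 30, 51],
     [5, 0, 0, 0, 54, 60, 69, 1, 66, 72, 63, 57], [17, 32, 0, 0, 0, 81, 87, 78, 13, 84, 75, 28],
     [11, 50, 59, 0, 0, 0, 96, 55, 46, 7, 93, 90], [26, 44, 65, 86, 0, 0, 0, 82, 99, 40, 22, 61],
     [20, 53, 74, 16, 49, 0, 0, 0, 70, 88, 97, 102],
     [2, 38, 56, 83, 95, 25, 0, 0, 0, 105, 34, 79],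
     [14, 47, 71, 77, 10, 43, 104, 0, 0, 0, 67, 100],
     [8, 41, 4, 89, 92, 85, 73, 37, 0, 0, 0, 106], [23, 35, 68, 31, 98, 64, 19, 94, 76, 0, 0, 0],
     [0, 29, 62, 80, 58, 101, 52, 107, 103, 91, 0, 0]]"

lemma rotation_certificate_C12:
  "rotation_certificate 12 (\<lambda>u v. u \<noteq> v \<and> \<not> consecutive 12 u v) rotation_C12 faces_C12 dart_index_C12"
  by code_simp

lemma face_counts_C12: "length (concat faces_C12) = 108" "length faces_C12 = 36"
  by code_simp+

lemma orientable_genus_complete_minus_ham_cycle_12:
  "orientable_genus (complete_minus_ham_cycle 12) = 4"
  by (rule orientable_genus_by_certificate[OF simple_graph_complete_minus_ham_cycle _
        darts_complete_minus_ham_cycle rotation_certificate_C12])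
    (simp_all add: verts_complete_minus_ham_cycle face_counts_C12)

definition rotation_K14 :: "nat list list" where
  "rotation_K14 =
    [[2, 1, 12, 10, 3, 13, 4, 8, 7, 9, 6, 11, 5], [2, 13, 9, 11, 8, 6, 12, 0, 3, 10, 5, 7, 4],
     [3, 0, 5, 9, 12, 11, 6, 10, 7, 8, 13, 1, 4], [0, 10, 1, 2, 5, 6, 9, 4, 12, 8, 11, 7, 13],
     [0, 13, 6, 5, 2, 1, 7, 11, 12, 3, 9, 10, 8], [0, 11, 13, 8, 12, 6, 3, 4, 7, 1, 10, 9, 2],
     [0, 9, 3, 5, 12, 1, 8, 7, 4, 13, 10, 2, 11], [0, 8, 2, 10, 12, 13, 3, 11, 4, 1, 5, 6, 9],
     [0, 4, 10, 9, 6, 1, 11, 3, 12, 5, 13, 2, 7], [0, 7, 8, 11, 1, 13, 12, 2, 5, 10, 4, 3, 6],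
     [0, 12, 7, 2, 6, 13, 11, 8, 4, 9, 5, 1, 3], [0, 6, 2, 12, 4, 7, 3, 8, 1, 9, 10, 13, 5],
     [0, 1, 6, 5, 8, 3, 4, 11, 2, 9, 13, 7, 10], [0, 3, 7, 12, 9, 1, 2, 8, 5, 11, 10, 6, 4]]"

definition faces_K14 :: "(nat \<times> nat) list list" where
  "faces_K14 =
    [[(0,2), (2,5), (5,0)], [(0,1), (1,3), (3,2), (2,0)], [(0,12), (12,1), (1,0)],
     [(0,10), (10,12), (12,0)], [(0,3), (3,10), (10,0)], [(0,13), (13,3), (3,0)],
     [(0,4), (4,13), (13,0)], [(0,8), (8,4), (4,0)], [(0,7), (7,8), (8,0)],
     [(0,9), (9,7), (7,0)], [(0,6), (6,9), (9,0)], [(0,11), (11,6), (6,0)],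
     [(0,5), (5,11), (11,0)], [(1,2), (2,4), (4,1)], [(1,13), (13,2), (2,1)],
     [(1,9), (9,13), (13,1)], [(1,11), (11,9), (9,1)], [(1,8), (8,11), (11,1)],
     [(1,6), (6,8), (8,1)], [(1,12), (12,6), (6,1)], [(1,10), (10,3), (3,1)],
     [(1,5), (5,10), (10,1)], [(1,7), (7,5), (5,1)], [(1,4), (4,7), (7,1)],
     [(2,3), (3,5), (5,4), (4,2)], [(2,9), (9,5), (5,2)], [(2,12), (12,9), (9,2)],
     [(2,11), (11,12), (12,2)], [(2,6), (6,11), (11,2)], [(2,10), (10,6), (6,2)],
     [(2,7), (7,10), (10,2)], [(2,8), (8,7), (7,2)], [(2,13), (13,8), (8,2)],
     [(3,6), (6,5), (5,3)], [(3,9), (9,6), (6,3)], [(3,4), (4,9), (9,3)],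
     [(3,12), (12,4), (4,3)], [(3,8), (8,12), (12,3)], [(3,11), (11,8), (8,3)],
     [(3,7), (7,11), (11,3)], [(3,13), (13,7), (7,3)], [(4,6), (6,13), (13,4)],
     [(4,5), (5,7), (7,6), (6,4)], [(4,11), (11,7), (7,4)], [(4,12), (12,11), (11,4)],
     [(4,10), (10,9), (9,4)], [(4,8), (8,10), (10,4)], [(5,13), (13,11), (11,5)],
     [(5,8), (8,13), (13,5)], [(5,12), (12,8), (8,5)], [(5,6), (6,12), (12,5)],
     [(5,9), (9,10), (10,5)], [(6,7), (7,9), (9,8), (8,6)], [(6,10), (10,13), (13,6)],
     [(7,12), (12,10), (10,7)], [(7,13), (13,12), (12,7)], [(8,9), (9,11), (11,10), (10,8)],
     [(9,12), (12,13), (13,9)], [(10,11), (11,13), (13,10)]]"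

definition dart_index_K14 :: "nat list list" where
  "dart_index_K14 =
    [[0, 3, 0, 13, 19, 37, 31, 25, 22, 28, 10, 34, 7, 16],
     [9, 0, 40, 4, 70, 64, 55, 67, 52, 46, 61, 49, 58, 43],
     [6, 45, 0, 73, 41, 1, 86, 92, 95, 77, 89, 83, 80, 98],
     [18, 63, 5, 0, 107, 74, 101, 119, 113, 104, 14, 116, 110, 122],
     [24, 42, 76, 112, 0, 128, 125, 71, 141, 108, 138, 132, 135, 20],
     [2, 69, 79, 103, 75, 0, 153, 129, 147, 156, 65, 38, 150, 144],
     [36, 60, 91, 106, 131, 102, 0, 159, 56, 32, 163, 87, 154, 126],
     [30, 72, 97, 124, 134, 68, 130, 0, 26, 160, 93, 120, 166, 169],
     [27, 57, 100, 118, 23, 152, 162, 96, 0, 172, 142, 53, 114, 148],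
     [33, 51, 82, 109, 140, 78, 105, 29, 161, 0, 157, 173, 176, 47],
     [15, 66, 94, 62, 143, 158, 90, 168, 175, 139, 0, 179, 11, 164],
     [39, 54, 88, 121, 137, 146, 35, 133, 117, 50, 174, 0, 84, 180],
     [12, 8, 85, 115, 111, 155, 59, 171, 151, 81, 167, 136, 0, 177],
     [21, 48, 44, 17, 127, 149, 165, 123, 99, 178, 181, 145, 170, 0]]"

lemma rotation_certificate_K14:
  "rotation_certificate 14 (\<lambda>u v. u \<noteq> v) rotation_K14 faces_K14 dart_index_K14"
  by code_simp

lemma face_counts_K14: "length (concat faces_K14) = 182" "length faces_K14 = 59"
  by code_simp+

lemma orientable_genus_complete_graph_14:
  "orientable_genus (complete_graph 14) = 10"
  by (rule orientable_genus_by_certificate[OF simple_graph_complete_graph _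
        darts_complete_graph rotation_certificate_K14])
    (simp_all add: verts_complete_graph face_counts_K14)

definition rotation_M15 :: "nat list list" where
  "rotation_M15 =
    [[2, 12, 3, 6, 5, 14, 8, 4, 9, 10, 13, 7, 11], [2, 4, 3, 12, 8, 10, 6, 11, 5, 9, 7, 14, 13],
     [0, 11, 8, 6, 10, 5, 7, 4, 1, 13, 9, 14, 12], [0, 12, 1, 4, 10, 9, 13, 5, 11, 7, 8, 14, 6],
     [0, 8, 11, 12, 13, 6, 14, 10, 3, 1, 2, 7, 9], [0, 6, 9, 1, 11, 3, 13, 8, 7, 2, 10, 12, 14],
     [0, 3, 14, 4, 13, 11, 1, 10, 2, 8, 12, 9, 5], [0, 13, 12, 10, 14, 1, 9, 4, 2, 5, 8, 3, 11],
     [0, 14, 3, 7, 5, 13, 10, 1, 12, 6, 2, 11, 4], [0, 4, 7, 1, 5, 6, 12, 11, 14, 2, 13, 3, 10],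
     [0, 9, 3, 4, 14, 7, 12, 5, 2, 6, 1, 8, 13], [0, 7, 3, 5, 1, 6, 13, 14, 9, 12, 4, 8, 2],
     [0, 2, 14, 5, 10, 7, 13, 4, 11, 9, 6, 8, 1, 3],
     [0, 10, 8, 5, 3, 9, 2, 1, 14, 11, 6, 4, 12, 7],
     [0, 5, 12, 2, 9, 11, 13, 1, 7, 10, 4, 6, 3, 8]]"

definition faces_M15 :: "(nat \<times> nat) list list" where
  "faces_M15 =
    [[(0,2), (2,11), (11,0)], [(0,12), (12,2), (2,0)], [(0,3), (3,12), (12,0)],
     [(0,6), (6,3), (3,0)], [(0,5), (5,6), (6,0)], [(0,14), (14,5), (5,0)],
     [(0,8), (8,14), (14,0)], [(0,4), (4,8), (8,0)], [(0,9), (9,4), (4,0)],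
     [(0,10), (10,9), (9,0)], [(0,13), (13,10), (10,0)], [(0,7), (7,13), (13,0)],
     [(0,11), (11,7), (7,0)], [(1,2), (2,13), (13,1)], [(1,4), (4,2), (2,1)],
     [(1,3), (3,4), (4,1)], [(1,12), (12,3), (3,1)], [(1,8), (8,12), (12,1)],
     [(1,10), (10,8), (8,1)], [(1,6), (6,10), (10,1)], [(1,11), (11,6), (6,1)],
     [(1,5), (5,11), (11,1)], [(1,9), (9,5), (5,1)], [(1,7), (7,9), (9,1)],
     [(1,14), (14,7), (7,1)], [(1,13), (13,14), (14,1)], [(2,8), (8,11), (11,2)],
     [(2,6), (6,8), (8,2)], [(2,10), (10,6), (6,2)], [(2,5), (5,10), (10,2)],
     [(2,7), (7,5), (5,2)], [(2,4), (4,7), (7,2)], [(2,9), (9,13), (13,2)],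
     [(2,14), (14,9), (9,2)], [(2,12), (12,14), (14,2)], [(3,10), (10,4), (4,3)],
     [(3,9), (9,10), (10,3)], [(3,13), (13,9), (9,3)], [(3,5), (5,13), (13,3)],
     [(3,11), (11,5), (5,3)], [(3,7), (7,11), (11,3)], [(3,8), (8,7), (7,3)],
     [(3,14), (14,8), (8,3)], [(3,6), (6,14), (14,3)], [(4,11), (11,8), (8,4)],
     [(4,12), (12,11), (11,4)], [(4,13), (13,12), (12,4)], [(4,6), (6,13), (13,4)],
     [(4,14), (14,6), (6,4)], [(4,10), (10,14), (14,4)], [(4,9), (9,7), (7,4)],
     [(5,9), (9,6), (6,5)], [(5,8), (8,13), (13,5)], [(5,7), (7,8), (8,5)],
     [(5,12), (12,10), (10,5)], [(5,14), (14,12), (12,5)], [(6,11), (11,13), (13,6)],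
     [(6,12), (12,8), (8,6)], [(6,9), (9,12), (12,6)], [(7,12), (12,13), (13,7)],
     [(7,10), (10,12), (12,7)], [(7,14), (14,10), (10,7)], [(8,10), (10,13), (13,8)],
     [(9,11), (11,12), (12,9)], [(9,14), (14,11), (11,9)], [(11,14), (14,13), (13,11)]]"

definition dart_index_M15 :: "nat list list" where
  "dart_index_M15 =
    [[0, 0, 0, 6, 21, 12, 9, 33, 18, 24, 27, 36, 3, 30, 15],
     [0, 0, 39, 45, 42, 63, 57, 69, 51, 66, 54, 60, 48, 75, 72],
     [5, 44, 0, 0, 93, 87, 81, 90, 78, 96, 84, 1, 102, 40, 99],
     [11, 50, 0, 0, 46, 114, 129, 120, 123, 108, 105, 117, 7, 111, 126],
     [26, 47, 43, 107, 0, 0, 141, 94, 22, 150, 147, 132, 135, 138, 144],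
     [17, 68, 92, 119, 0, 0, 13, 159, 156, 153, 88, 64, 162, 115, 165],
     [14, 62, 86, 10, 146, 155, 0, 0, 82, 174, 58, 168, 171, 142, 130],
     [38, 74, 95, 125, 152, 91, 0, 0, 160, 70, 180, 121, 177, 34, 183],
     [23, 56, 83, 128, 134, 161, 173, 124, 0, 0, 186, 79, 52, 157, 19],
     [29, 71, 101, 113, 25, 67, 154, 151, 0, 0, 109, 189, 175, 97, 192],
     [32, 59, 89, 110, 106, 164, 85, 185, 55, 28, 0, 0, 181, 187, 148],
     [2, 65, 80, 122, 137, 118, 61, 37, 133, 194, 0, 0, 190, 169, 195],
     [8, 53, 4, 49, 140, 167, 176, 182, 172, 191, 163, 136, 0, 178, 103],
     [35, 41, 98, 116, 143, 158, 170, 179, 188, 112, 31, 197, 139, 0, 76],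
     [20, 77, 104, 131, 149, 16, 145, 73, 127, 100, 184, 193, 166, 196, 0]]"

lemma rotation_certificate_M15:
  "rotation_certificate 15 (\<lambda>u v. u \<noteq> v \<and> \<not> matched 6 u v) rotation_M15 faces_M15 dart_index_M15"
  by code_simp

lemma face_counts_M15: "length (concat faces_M15) = 198" "length faces_M15 = 66"
  by code_simp+

lemma orientable_genus_complete_minus_matching_15_6:
  "orientable_genus (complete_minus_matching 15 6) = 10"
  by (rule orientable_genus_by_certificate[OF simple_graph_complete_minus_matching _
        darts_complete_minus_matching rotation_certificate_M15])
    (simp_all add: verts_complete_minus_matching face_counts_M15)

theorem mainTheorem4:
  shows "vertex_connectivity (complete_graph 10) = 9 \<and> orientable_genus (complete_graph 10) = 4 \<and>
         vertex_connectivity (complete_minus_ham_cycle 12) = 9 \<and>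
         orientable_genus (complete_minus_ham_cycle 12) = 4 \<and>
         vertex_connectivity (complete_graph 14) = 13 \<and> orientable_genus (complete_graph 14) = 10 \<and>
         vertex_connectivity (complete_minus_matching 15 6) = 13 \<and>
         orientable_genus (complete_minus_matching 15 6) = 10 \<and>
         \<not> graph_iso (complete_graph 10) (complete_minus_ham_cycle 12) \<and>
         \<not> graph_iso (complete_graph 14) (complete_minus_matching 15 6)"
proof -
  have "\<not> graph_iso (complete_graph 10) (complete_minus_ham_cycle 12)"
    "\<not> graph_iso (complete_graph 14) (complete_minus_matching 15 6)"
    by (auto dest!: graph_iso_card_verts
        simp: verts_complete_graph verts_complete_minus_ham_cycle verts_complete_minus_matching)
  then show ?thesis
    using vertex_connectivity_complete_graph[of 10] vertex_connectivity_complete_graph[of 14]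
      vertex_connectivity_complete_minus_ham_cycle[of 12]
      vertex_connectivity_complete_minus_matching[of 6 15]
      orientable_genus_complete_graph_10 orientable_genus_complete_minus_ham_cycle_12
      orientable_genus_complete_graph_14 orientable_genus_complete_minus_matching_15_6
    by simp
qed

end
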